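(* Let $X$ be a Tychonoff space and $n\in\mathbb N$. Then $C_p(X,\mathbb R^n)$ is strictly H-bounded iff it is H-bounded iff it is strictly M-bounded iff it is M-bounded iff $X$ is pseudocompact. On the other hand, for every nonempty Tychonoff space $X$, $C_p(X,\mathbb R^\omega)$ is not H-bounded.
   Context: $C_p(X,Y)$ for a topological group $Y$ denotes the group of continuous maps $X\to Y$ under pointwise operation with the topology of pointwise convergence; $\mathbb R^\omega$ carries the product topology. For a topological group $G$ with identity $e$: M-bounded means for every sequence $(U_n)$ of neighborhoods of $e$ there are finite $A_n\subset G$ with $G=\bigcup_nA_nU_n$; H-bounded means there are finite $A_n$ with each $x\in G$ in all but finitely many $A_nU_n$. In the game where in round $n$ ONE picks a neighborhood $U_n$ of $e$ and TWO a finite $A_n\subset G$, $G$ is strictly M-bounded (resp. strictly H-bounded) if TWO has a strategy guaranteeing $G=\bigcup_nA_nU_n$ (resp. each $x\in G$ lies in all but finitely many $A_nU_n$). *)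

theory Defs
  imports "HOL-Analysis.Analysis" "HOL-Library.Function_Algebras"
begin

definition tychonoff_space :: "'a topology \<Rightarrow> bool" where
  "tychonoff_space X \<longleftrightarrow> completely_regular_space X \<and> t1_space X"

definition pseudocompact :: "'a topology \<Rightarrow> bool" where
  "pseudocompact X \<longleftrightarrow>
     (\<forall>f. continuous_map X euclideanreal f \<longrightarrow> bounded (f ` topspace X))"

text \<open>Generic notions for a topological group given by its topology T (carrier = topspace T),
  group operation op and identity e.\<close>

definition nbhd_e :: "'g topology \<Rightarrow> 'g \<Rightarrow> 'g set \<Rightarrow> bool" where
  "nbhd_e T e U \<longleftrightarrow> U \<subseteq> topspace T \<and> (\<exists>W. openin T W \<and> e \<in> W \<and> W \<subseteq> U)"

definition set_op :: "('g \<Rightarrow> 'g \<Rightarrow> 'g) \<Rightarrow> 'g set \<Rightarrow> 'g set \<Rightarrow> 'g set" where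
  "set_op op A U = {op a u | a u. a \<in> A \<and> u \<in> U}"

definition M_bounded :: "'g topology \<Rightarrow> ('g \<Rightarrow> 'g \<Rightarrow> 'g) \<Rightarrow> 'g \<Rightarrow> bool" where
  "M_bounded T op e \<longleftrightarrow>
     (\<forall>U::nat \<Rightarrow> 'g set. (\<forall>n. nbhd_e T e (U n)) \<longrightarrow>
        (\<exists>A. (\<forall>n. finite (A n) \<and> A n \<subseteq> topspace T) \<and>
             topspace T = (\<Union>n. set_op op (A n) (U n))))"

definition H_bounded :: "'g topology \<Rightarrow> ('g \<Rightarrow> 'g \<Rightarrow> 'g) \<Rightarrow> 'g \<Rightarrow> bool" where
  "H_bounded T op e \<longleftrightarrow>
     (\<forall>U::nat \<Rightarrow> 'g set. (\<forall>n. nbhd_e T e (U n)) \<longrightarrow>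
        (\<exists>A. (\<forall>n. finite (A n) \<and> A n \<subseteq> topspace T) \<and>
             (\<forall>x\<in>topspace T. eventually (\<lambda>n. x \<in> set_op op (A n) (U n)) sequentially)))"

text \<open>Strategies of player TWO: a map from the history of ONE's moves
  (U_0, ..., U_n) to TWO's finite set A_n.\<close>

definition two_strategy :: "'g topology \<Rightarrow> 'g \<Rightarrow> ('g set list \<Rightarrow> 'g set) \<Rightarrow> bool" where
  "two_strategy T e \<sigma> \<longleftrightarrow>
     (\<forall>us. (\<forall>u\<in>set us. nbhd_e T e u) \<longrightarrow> finite (\<sigma> us) \<and> \<sigma> us \<subseteq> topspace T)"

definition strictly_M_bounded :: "'g topology \<Rightarrow> ('g \<Rightarrow> 'g \<Rightarrow> 'g) \<Rightarrow> 'g \<Rightarrow> bool" where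
  "strictly_M_bounded T op e \<longleftrightarrow>
     (\<exists>\<sigma>. two_strategy T e \<sigma> \<and>
        (\<forall>U::nat \<Rightarrow> 'g set. (\<forall>n. nbhd_e T e (U n)) \<longrightarrow>
           topspace T = (\<Union>n. set_op op (\<sigma> (map U [0..<Suc n])) (U n))))"

definition strictly_H_bounded :: "'g topology \<Rightarrow> ('g \<Rightarrow> 'g \<Rightarrow> 'g) \<Rightarrow> 'g \<Rightarrow> bool" where
  "strictly_H_bounded T op e \<longleftrightarrow>
     (\<exists>\<sigma>. two_strategy T e \<sigma> \<and>
        (\<forall>U::nat \<Rightarrow> 'g set. (\<forall>n. nbhd_e T e (U n)) \<longrightarrow>
           (\<forall>x\<in>topspace T.
              eventually (\<lambda>n. x \<in> set_op op (\<sigma> (map U [0..<Suc n])) (U n)) sequentially)))"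

text \<open>C_p(X,Y): continuous maps X \<rightarrow> Y (as extensional functions on topspace X),
  with the topology of pointwise convergence (subspace of the product topology)
  and pointwise addition; identity is the constant zero map.\<close>

definition Cp :: "'a topology \<Rightarrow> ('a \<Rightarrow> 'b::{topological_space,ab_group_add}) topology" where
  "Cp X = subtopology (product_topology (\<lambda>_. euclidean) (topspace X))
            {f. continuous_map X euclidean f \<and> f \<in> extensional (topspace X)}"

definition Cp_add :: "'a topology \<Rightarrow> ('a \<Rightarrow> 'b::ab_group_add) \<Rightarrow> ('a \<Rightarrow> 'b) \<Rightarrow> ('a \<Rightarrow> 'b)" where
  "Cp_add X f g = restrict (\<lambda>x. f x + g x) (topspace X)"

definition Cp_zero :: "'a topology \<Rightarrow> ('a \<Rightarrow> 'b::ab_group_add)" where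
  "Cp_zero X = restrict (\<lambda>x. 0) (topspace X)"

end

theory Submission
  imports Defs
begin

text \<open>If X is pseudocompact, every f in C_p(X, R^n) is bounded. A basic neighbourhood of 0 only
  controls finitely many points up to some e > 0, and on finitely many points the functions bounded
  by N form a totally bounded subset of a finite-dimensional space, so they are covered by finitely
  many translates of the neighbourhood. Answering the n-th move of ONE by such a finite set for the
  bound n wins the strict H-game, and strict H-boundedness implies the other three properties.
  Conversely, let f be continuous and unbounded, with n <= |f x_n|. Against the neighbourhoods
  {g. |g x_n| < 1} the finite answers A_n only reach values of size c_n at x_n, while for a continuous
  psi with psi >= c_n on [n, oo) the function psi o |f| escapes all of them. In C_p(X, R^omega) the
  same diagonal argument works at a single point, the coordinates taking the place of the points x_n.\<close>

lemma strategy_move: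
  assumes "two_strategy T e \<sigma>" "\<And>n. nbhd_e T e (U n)"
  shows "finite (\<sigma> (map U [0..<Suc n]))" "\<sigma> (map U [0..<Suc n]) \<subseteq> topspace T"
  using assms unfolding two_strategy_def by auto

lemma strictly_H_bounded_imp_H_bounded:
  assumes "strictly_H_bounded T op e"
  shows "H_bounded T op e"
proof -
  obtain \<sigma> where \<sigma>: "two_strategy T e \<sigma>" and win: "\<And>U. \<forall>n. nbhd_e T e (U n) \<Longrightarrow>
      \<forall>x\<in>topspace T. \<forall>\<^sub>F n in sequentially. x \<in> set_op op (\<sigma> (map U [0..<Suc n])) (U n)"
    using assms unfolding strictly_H_bounded_def by blast
  show ?thesis
    unfolding H_bounded_def
  proof (intro allI impI)
    fix U :: "nat \<Rightarrow> _" assume U: "\<forall>n. nbhd_e T e (U n)"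
    then have "\<forall>n. finite (\<sigma> (map U [0..<Suc n])) \<and> \<sigma> (map U [0..<Suc n]) \<subseteq> topspace T"
      using strategy_move[OF \<sigma>] by blast
    with win[OF U] show "\<exists>A. (\<forall>n. finite (A n) \<and> A n \<subseteq> topspace T) \<and>
        (\<forall>x\<in>topspace T. \<forall>\<^sub>F n in sequentially. x \<in> set_op op (A n) (U n))"
      by (intro exI[of _ "\<lambda>n. \<sigma> (map U [0..<Suc n])"] conjI)
  qed
qed

lemma strictly_M_bounded_imp_M_bounded:
  assumes "strictly_M_bounded T op e"
  shows "M_bounded T op e"
proof -
  obtain \<sigma> where \<sigma>: "two_strategy T e \<sigma>" and win: "\<And>U. \<forall>n. nbhd_e T e (U n) \<Longrightarrow>
      topspace T = (\<Union>n. set_op op (\<sigma> (map U [0..<Suc n])) (U n))"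
    using assms unfolding strictly_M_bounded_def by blast
  show ?thesis
    unfolding M_bounded_def
  proof (intro allI impI)
    fix U :: "nat \<Rightarrow> _" assume U: "\<forall>n. nbhd_e T e (U n)"
    then have "\<forall>n. finite (\<sigma> (map U [0..<Suc n])) \<and> \<sigma> (map U [0..<Suc n]) \<subseteq> topspace T"
      using strategy_move[OF \<sigma>] by blast
    with win[OF U] show "\<exists>A. (\<forall>n. finite (A n) \<and> A n \<subseteq> topspace T) \<and>
        topspace T = (\<Union>n. set_op op (A n) (U n))"
      by (intro exI[of _ "\<lambda>n. \<sigma> (map U [0..<Suc n])"] conjI)
  qed
qed

lemma covered_if_eventually_covered:
  assumes closed: "\<And>a u. a \<in> topspace T \<Longrightarrow> u \<in> topspace T \<Longrightarrow> op a u \<in> topspace T"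
    and "\<And>n. A n \<subseteq> topspace T" "\<And>n. nbhd_e T e (U n)"
    and "\<forall>x\<in>topspace T. \<forall>\<^sub>F n in sequentially. x \<in> set_op op (A n) (U n)"
  shows "topspace T = (\<Union>n. set_op op (A n) (U n))"
proof
  show "topspace T \<subseteq> (\<Union>n. set_op op (A n) (U n))"
  proof
    fix x assume "x \<in> topspace T"
    then have "\<forall>\<^sub>F n in sequentially. x \<in> set_op op (A n) (U n)"
      using assms(4) by blast
    then obtain n where "x \<in> set_op op (A n) (U n)"
      unfolding eventually_sequentially by blast
    then show "x \<in> (\<Union>n. set_op op (A n) (U n))" by blast
  qed
  show "(\<Union>n. set_op op (A n) (U n)) \<subseteq> topspace T"
  proof (rule UN_least)
    fix n
    have "A n \<subseteq> topspace T" "U n \<subseteq> topspace T"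
      using assms(2,3)[of n] unfolding nbhd_e_def by auto
    then show "set_op op (A n) (U n) \<subseteq> topspace T"
      unfolding set_op_def using closed by blast
  qed
qed

lemma H_bounded_imp_M_bounded:
  assumes closed: "\<And>a u. a \<in> topspace T \<Longrightarrow> u \<in> topspace T \<Longrightarrow> op a u \<in> topspace T"
    and "H_bounded T op e"
  shows "M_bounded T op e"
  unfolding M_bounded_def
proof (intro allI impI)
  fix U :: "nat \<Rightarrow> _" assume U: "\<forall>n. nbhd_e T e (U n)"
  then obtain A where A: "\<forall>n. finite (A n) \<and> A n \<subseteq> topspace T"
    "\<forall>x\<in>topspace T. \<forall>\<^sub>F n in sequentially. x \<in> set_op op (A n) (U n)"
    using assms(2) unfolding H_bounded_def by blast
  moreover have "topspace T = (\<Union>n. set_op op (A n) (U n))"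
    using A U by (intro covered_if_eventually_covered[OF closed]) auto
  ultimately show "\<exists>A. (\<forall>n. finite (A n) \<and> A n \<subseteq> topspace T) \<and>
      topspace T = (\<Union>n. set_op op (A n) (U n))"
    by blast
qed

lemma strictly_H_bounded_imp_strictly_M_bounded:
  assumes closed: "\<And>a u. a \<in> topspace T \<Longrightarrow> u \<in> topspace T \<Longrightarrow> op a u \<in> topspace T"
    and "strictly_H_bounded T op e"
  shows "strictly_M_bounded T op e"
proof -
  obtain \<sigma> where \<sigma>: "two_strategy T e \<sigma>" and win: "\<And>U. \<forall>n. nbhd_e T e (U n) \<Longrightarrow>
      \<forall>x\<in>topspace T. \<forall>\<^sub>F n in sequentially. x \<in> set_op op (\<sigma> (map U [0..<Suc n])) (U n)"
    using assms(2) unfolding strictly_H_bounded_def by blast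
  have "topspace T = (\<Union>n. set_op op (\<sigma> (map U [0..<Suc n])) (U n))"
    if "\<forall>n. nbhd_e T e (U n)" for U
    using that strategy_move[OF \<sigma>] win[OF that]
    by (intro covered_if_eventually_covered[OF closed]) auto
  with \<sigma> show ?thesis
    unfolding strictly_M_bounded_def by blast
qed

lemma topspace_Cp:
  "topspace (Cp X :: ('a \<Rightarrow> 'b::{topological_space,ab_group_add}) topology)
     = {f. continuous_map X euclidean f \<and> f \<in> extensional (topspace X)}"
  unfolding Cp_def by (auto simp: PiE_def)

lemma Cp_zero_in_Cp:
  "Cp_zero X \<in> topspace (Cp X :: ('a \<Rightarrow> 'b::{topological_space,ab_group_add}) topology)"
  by (simp add: topspace_Cp Cp_zero_def continuous_map_eq[OF continuous_map_const[THEN iffD2]])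

lemma Cp_add_in_Cp:
  fixes f g :: "'a \<Rightarrow> 'b::real_normed_vector"
  assumes "f \<in> topspace (Cp X)" "g \<in> topspace (Cp X)"
  shows "Cp_add X f g \<in> topspace (Cp X)"
proof -
  have "continuous_map X euclidean (\<lambda>x. f x + g x)"
    using assms by (auto simp: topspace_Cp intro: continuous_map_add)
  then have "continuous_map X euclidean (Cp_add X f g)"
    by (rule continuous_map_eq) (simp add: Cp_add_def)
  then show ?thesis by (simp add: topspace_Cp Cp_add_def)
qed

lemma Cp_exists_difference:
  fixes f a :: "'a \<Rightarrow> 'b::real_normed_vector"
  assumes "f \<in> topspace (Cp X)" "a \<in> topspace (Cp X)"
  obtains u where "u \<in> topspace (Cp X)" "Cp_add X a u = f" "\<And>x. x \<in> topspace X \<Longrightarrow> u x = f x - a x"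
proof
  let ?u = "restrict (\<lambda>x. f x - a x) (topspace X)"
  have "continuous_map X euclidean (\<lambda>x. f x - a x)"
    using assms by (auto simp: topspace_Cp intro: continuous_map_diff)
  then have "continuous_map X euclidean ?u"
    by (rule continuous_map_eq) simp
  then show "?u \<in> topspace (Cp X)" by (simp add: topspace_Cp)
  show "Cp_add X a ?u = f"
    using assms(1) by (auto simp: Cp_add_def topspace_Cp extensional_def)
  show "?u x = f x - a x" if "x \<in> topspace X" for x
    using that by simp
qed

lemma continuous_map_Cp_eval:
  assumes "x \<in> topspace X"
  shows "continuous_map (Cp X :: ('a \<Rightarrow> 'b::{topological_space,ab_group_add}) topology) euclidean (\<lambda>f. f x)"
  unfolding Cp_def
  by (rule continuous_map_from_subtopology)
    (rule continuous_map_product_projection[where X="\<lambda>_. euclidean", simplified, OF assms])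

lemma nbhd_e_Cp_eval:
  fixes V :: "'b::{topological_space,ab_group_add} set"
  assumes "x \<in> topspace X" "open V" "0 \<in> V"
  shows "nbhd_e (Cp X :: ('a \<Rightarrow> 'b) topology) (Cp_zero X) {f \<in> topspace (Cp X). f x \<in> V}"
proof -
  have "openin (Cp X) {f \<in> topspace (Cp X :: ('a \<Rightarrow> 'b) topology). f x \<in> V}"
    using openin_continuous_map_preimage[OF continuous_map_Cp_eval[OF assms(1)]] assms(2)
    by simp
  moreover have "Cp_zero X \<in> {f \<in> topspace (Cp X :: ('a \<Rightarrow> 'b) topology). f x \<in> V}"
    using Cp_zero_in_Cp assms(1,3) by (simp add: Cp_zero_def)
  ultimately show ?thesis
    unfolding nbhd_e_def by blast
qed

lemma nbhd_e_Cp_contains_basic: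
  fixes U :: "('a \<Rightarrow> 'b::real_normed_vector) set"
  assumes "nbhd_e (Cp X) (Cp_zero X) U"
  obtains F e where "finite F" "F \<subseteq> topspace X" "e > 0"
    "\<And>f. f \<in> topspace (Cp X) \<Longrightarrow> (\<forall>x\<in>F. norm (f x) < e) \<Longrightarrow> f \<in> U"
proof -
  obtain W where W: "openin (Cp X) W" "Cp_zero X \<in> W" "W \<subseteq> U"
    using assms unfolding nbhd_e_def by blast
  obtain W' where W': "openin (product_topology (\<lambda>_. euclidean) (topspace X)) W'"
      "W = W' \<inter> {f. continuous_map X euclidean f \<and> f \<in> extensional (topspace X)}"
    using W(1) unfolding Cp_def openin_subtopology by blast
  have "Cp_zero X \<in> W'" using W(2) unfolding W'(2) by blast
  then obtain V where V: "finite {x \<in> topspace X. V x \<noteq> UNIV}"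
      "\<forall>x\<in>topspace X. open (V x)" "Cp_zero X \<in> Pi\<^sub>E (topspace X) V"
      "Pi\<^sub>E (topspace X) V \<subseteq> W'"
    using W'(1) unfolding openin_product_topology_alt by auto
  define F where "F = {x \<in> topspace X. V x \<noteq> UNIV}"
  have "finite F" "F \<subseteq> topspace X"
    using V(1) by (auto simp: F_def)
  have "open (\<Inter>x\<in>F. V x)"
    using \<open>finite F\<close> V(2) F_def by (intro open_INT) auto
  moreover have "0 \<in> (\<Inter>x\<in>F. V x)"
    using V(3) F_def by (auto simp: Cp_zero_def)
  ultimately obtain e where "e > 0" and e: "ball 0 e \<subseteq> (\<Inter>x\<in>F. V x)"
    using open_contains_ball by blast
  show thesis
  proof (rule that[OF \<open>finite F\<close> \<open>F \<subseteq> topspace X\<close> \<open>e > 0\<close>])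
    fix f :: "'a \<Rightarrow> 'b" assume f: "f \<in> topspace (Cp X)" "\<forall>x\<in>F. norm (f x) < e"
    have "f x \<in> V x" if "x \<in> topspace X" for x
    proof (cases "x \<in> F")
      case True
      then have "f x \<in> ball 0 e" using f(2) by simp
      then show ?thesis using True e by blast
    next
      case False
      then show ?thesis using that unfolding F_def by simp
    qed
    then have "f \<in> W'"
      using f(1) V(4) by (auto simp: topspace_Cp PiE_def)
    then show "f \<in> U"
      using f(1) W W' by (auto simp: topspace_Cp)
  qed
qed

lemma abs_diff_less_one_if_floor_eq:
  fixes x y :: real
  assumes "\<lfloor>x\<rfloor> = \<lfloor>y\<rfloor>"
  shows "\<bar>x - y\<bar> < 1"
  using assms of_int_floor_le[of x] of_int_floor_le[of y]
    real_of_int_floor_add_one_gt[of x] real_of_int_floor_add_one_gt[of y]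
  by linarith

lemma euclidean_quantization:
  fixes N e :: real
  assumes "e > 0"
  obtains q :: "'b::euclidean_space \<Rightarrow> 'b \<Rightarrow> int"
  where "finite (q ` cball 0 N)" "\<And>v w. q v = q w \<Longrightarrow> norm (v - w) < e"
proof
  define k where "k = (real DIM('b) + 1) / e"
  have k: "k > 0" "real DIM('b) * (1 / k) < e"
    using assms by (simp_all add: k_def field_simps)
  define q where "q v = (\<lambda>i\<in>Basis. \<lfloor>k * (v \<bullet> i)\<rfloor>)" for v :: 'b
  have "q v \<in> Pi\<^sub>E Basis (\<lambda>_. {\<lfloor>k * (- N)\<rfloor>..\<lceil>k * N\<rceil>})" if "norm v \<le> N" for v
  proof -
    have "\<lfloor>k * (v \<bullet> i)\<rfloor> \<in> {\<lfloor>k * (- N)\<rfloor>..\<lceil>k * N\<rceil>}" if "i \<in> Basis" for i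
    proof -
      have "\<bar>v \<bullet> i\<bar> \<le> N"
        using Basis_le_norm[OF that, of v] \<open>norm v \<le> N\<close> by linarith
      then have "k * (- N) \<le> k * (v \<bullet> i)" "k * (v \<bullet> i) \<le> k * N"
        using k(1) by (simp_all only: mult_le_cancel_left_pos)
      then show ?thesis
        using floor_le_ceiling[of "k * (v \<bullet> i)"] by (auto intro: floor_mono ceiling_mono order_trans)
    qed
    then show ?thesis by (simp add: q_def)
  qed
  then have "q ` cball 0 N \<subseteq> Pi\<^sub>E Basis (\<lambda>_. {\<lfloor>k * (- N)\<rfloor>..\<lceil>k * N\<rceil>})"
    by (intro image_subsetI) simp
  then show "finite (q ` cball 0 N)"
    by (rule finite_subset) (simp add: finite_PiE)
  fix v w :: 'b
  assume eq: "q v = q w"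
  have "\<bar>k * (v \<bullet> i) - k * (w \<bullet> i)\<bar> < 1" if "i \<in> Basis" for i
    using fun_cong[OF eq, of i] that
    by (intro abs_diff_less_one_if_floor_eq) (simp add: q_def)
  moreover have "\<bar>k * (v \<bullet> i) - k * (w \<bullet> i)\<bar> = k * \<bar>(v - w) \<bullet> i\<bar>" for i
    using k(1) by (simp add: inner_diff_left abs_mult flip: right_diff_distrib)
  ultimately have "\<bar>(v - w) \<bullet> i\<bar> \<le> 1 / k" if "i \<in> Basis" for i
    using that k(1) by (simp add: pos_le_divide_eq mult.commute less_imp_le)
  then have "(\<Sum>i\<in>Basis. \<bar>(v - w) \<bullet> i\<bar>) \<le> real DIM('b) * (1 / k)"
    by (rule sum_bounded_above)
  then show "norm (v - w) < e"
    using norm_le_l1[of "v - w"] k(2) by linarith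
qed

lemma finite_pointwise_net:
  fixes B :: "('a \<Rightarrow> 'b::euclidean_space) set"
  assumes "finite F" "e > 0" and bounded: "\<And>f x. f \<in> B \<Longrightarrow> x \<in> F \<Longrightarrow> norm (f x) \<le> N"
  obtains A where "finite A" "A \<subseteq> B" "\<And>f. f \<in> B \<Longrightarrow> \<exists>a\<in>A. \<forall>x\<in>F. norm (f x - a x) < e"
proof -
  obtain q :: "'b \<Rightarrow> 'b \<Rightarrow> int"
    where q: "finite (q ` cball 0 N)" "\<And>v w. q v = q w \<Longrightarrow> norm (v - w) < e"
    using euclidean_quantization[OF \<open>e > 0\<close>] by blast
  define key where "key f = (\<lambda>x\<in>F. q (f x))" for f :: "'a \<Rightarrow> 'b"
  have "key ` B \<subseteq> Pi\<^sub>E F (\<lambda>_. q ` cball 0 N)"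
    using bounded by (auto simp: key_def)
  then have "finite (key ` B)"
    by (rule finite_subset) (simp add: finite_PiE \<open>finite F\<close> q(1))
  show thesis
  proof (rule that[of "inv_into B key ` key ` B"])
    show "finite (inv_into B key ` key ` B)"
      using \<open>finite (key ` B)\<close> by simp
    show "inv_into B key ` key ` B \<subseteq> B"
      by (auto intro: inv_into_into)
    fix f assume "f \<in> B"
    let ?a = "inv_into B key (key f)"
    have same_key: "key ?a = key f"
      using \<open>f \<in> B\<close> by (simp add: f_inv_into_f)
    have "q (f x) = q (?a x)" if "x \<in> F" for x
      using fun_cong[OF same_key, of x] that by (simp add: key_def)
    then have "\<forall>x\<in>F. norm (f x - ?a x) < e"
      using q(2) by blast
    then show "\<exists>a\<in>inv_into B key ` key ` B. \<forall>x\<in>F. norm (f x - a x) < e"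
      using \<open>f \<in> B\<close> by blast
  qed
qed

lemma Cp_bounded_covered_by_finite_translates:
  fixes U :: "('a \<Rightarrow> 'b::euclidean_space) set" and N :: real
  assumes "nbhd_e (Cp X) (Cp_zero X) U"
  obtains A where "finite A" "A \<subseteq> topspace (Cp X)"
    "\<And>f. f \<in> topspace (Cp X) \<Longrightarrow> \<forall>x\<in>topspace X. norm (f x) \<le> N \<Longrightarrow> f \<in> set_op (Cp_add X) A U"
proof -
  obtain F e where F: "finite F" "F \<subseteq> topspace X" "e > 0"
    and small: "\<And>f. f \<in> topspace (Cp X) \<Longrightarrow> \<forall>x\<in>F. norm (f x) < e \<Longrightarrow> f \<in> U"
    using nbhd_e_Cp_contains_basic[OF assms] by blast
  define B :: "('a \<Rightarrow> 'b) set" where "B = {f \<in> topspace (Cp X). \<forall>x\<in>topspace X. norm (f x) \<le> N}"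
  have "norm (f x) \<le> N" if "f \<in> B" "x \<in> F" for f :: "'a \<Rightarrow> 'b" and x
    using that F(2) unfolding B_def by blast
  then obtain A where A: "finite A" "A \<subseteq> B" "\<And>f. f \<in> B \<Longrightarrow> \<exists>a\<in>A. \<forall>x\<in>F. norm (f x - a x) < e"
    using finite_pointwise_net[OF F(1,3)] by metis
  show thesis
  proof (rule that[of A])
    show "finite A" "A \<subseteq> topspace (Cp X)"
      using A unfolding B_def by auto
    fix f :: "'a \<Rightarrow> 'b" assume "f \<in> topspace (Cp X)" "\<forall>x\<in>topspace X. norm (f x) \<le> N"
    then have "f \<in> B" by (simp add: B_def)
    then obtain a where "a \<in> A" and close: "\<forall>x\<in>F. norm (f x - a x) < e"
      using A(3) by blast
    have "a \<in> topspace (Cp X)"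
      using A(2) \<open>a \<in> A\<close> unfolding B_def by blast
    then obtain u where u: "u \<in> topspace (Cp X)" "Cp_add X a u = f"
        "\<And>x. x \<in> topspace X \<Longrightarrow> u x = f x - a x"
      using Cp_exists_difference \<open>f \<in> topspace (Cp X)\<close> by blast
    have "\<forall>x\<in>F. norm (u x) < e"
      using close u(3) F(2) by (simp add: subset_iff)
    then have "u \<in> U"
      using small[OF u(1)] by blast
    then show "f \<in> set_op (Cp_add X) A U"
      unfolding set_op_def using \<open>a \<in> A\<close> u(2) by blast
  qed
qed

lemma pseudocompact_bounded_Cp:
  assumes "pseudocompact X" "f \<in> topspace (Cp X :: ('a \<Rightarrow> 'b::real_normed_vector) topology)"
  obtains N :: nat where "\<And>x. x \<in> topspace X \<Longrightarrow> norm (f x) \<le> real N"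
proof -
  have "continuous_map X euclideanreal (\<lambda>x. norm (f x))"
    using assms(2) by (auto simp: topspace_Cp intro: continuous_map_norm)
  then have "bounded ((\<lambda>x. norm (f x)) ` topspace X)"
    using assms(1) by (simp add: pseudocompact_def)
  then obtain b where "\<forall>x\<in>topspace X. norm (f x) \<le> b"
    by (auto simp: bounded_iff)
  moreover obtain N :: nat where "b \<le> real N"
    using real_arch_simple by blast
  ultimately show thesis
    using that order_trans by blast
qed

lemma Cp_strategy_covering_bounded:
  obtains \<sigma> where "two_strategy (Cp X :: ('a \<Rightarrow> 'b::euclidean_space) topology) (Cp_zero X) \<sigma>"
    "\<And>us f. nbhd_e (Cp X) (Cp_zero X) (last us) \<Longrightarrow> f \<in> topspace (Cp X) \<Longrightarrow>
      \<forall>x\<in>topspace X. norm (f x) \<le> real (length us) \<Longrightarrow> f \<in> set_op (Cp_add X) (\<sigma> us) (last us)"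
proof -
  define good where "good us A \<longleftrightarrow> finite A \<and> A \<subseteq> topspace (Cp X) \<and>
      (nbhd_e (Cp X) (Cp_zero X) (last us) \<longrightarrow>
        (\<forall>f\<in>topspace (Cp X). (\<forall>x\<in>topspace X. norm (f x) \<le> real (length us))
           \<longrightarrow> f \<in> set_op (Cp_add X) A (last us)))"
    for us :: "('a \<Rightarrow> 'b) set list" and A
  have "\<exists>A. good us A" for us
  proof (cases "nbhd_e (Cp X) (Cp_zero X) (last us)")
    case True
    obtain A where "finite A" "A \<subseteq> topspace (Cp X)"
      "\<And>f. f \<in> topspace (Cp X) \<Longrightarrow> \<forall>x\<in>topspace X. norm (f x) \<le> real (length us)
         \<Longrightarrow> f \<in> set_op (Cp_add X) A (last us)"
      using Cp_bounded_covered_by_finite_translates[OF True, where N = "real (length us)"] by blast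
    then show ?thesis
      unfolding good_def by blast
  next
    case False
    then show ?thesis
      unfolding good_def by (intro exI[of _ "{}"]) auto
  qed
  then obtain \<sigma> where \<sigma>: "\<And>us. good us (\<sigma> us)"
    by metis
  show thesis
  proof (rule that)
    show "two_strategy (Cp X) (Cp_zero X) \<sigma>"
      using \<sigma> unfolding two_strategy_def good_def by blast
  qed (use \<sigma> good_def in blast)
qed

lemma pseudocompact_imp_strictly_H_bounded:
  assumes "pseudocompact X"
  shows "strictly_H_bounded (Cp X :: ('a \<Rightarrow> 'b::euclidean_space) topology) (Cp_add X) (Cp_zero X)"
proof -
  obtain \<sigma> where \<sigma>: "two_strategy (Cp X :: ('a \<Rightarrow> 'b) topology) (Cp_zero X) \<sigma>"
    and cover: "\<And>us f. nbhd_e (Cp X) (Cp_zero X) (last us) \<Longrightarrow> f \<in> topspace (Cp X) \<Longrightarrow>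
      \<forall>x\<in>topspace X. norm (f x) \<le> real (length us) \<Longrightarrow> f \<in> set_op (Cp_add X) (\<sigma> us) (last us)"
    using Cp_strategy_covering_bounded[of X] by blast
  show ?thesis
    unfolding strictly_H_bounded_def
  proof (intro exI conjI allI impI ballI)
    show "two_strategy (Cp X) (Cp_zero X) \<sigma>"
      by (rule \<sigma>)
    fix U :: "nat \<Rightarrow> ('a \<Rightarrow> 'b) set" and f :: "'a \<Rightarrow> 'b"
    assume U: "\<forall>n. nbhd_e (Cp X) (Cp_zero X) (U n)" and f: "f \<in> topspace (Cp X)"
    obtain N :: nat where N: "\<And>x. x \<in> topspace X \<Longrightarrow> norm (f x) \<le> real N"
      using pseudocompact_bounded_Cp[OF assms f] by blast
    have "f \<in> set_op (Cp_add X) (\<sigma> (map U [0..<Suc n])) (U n)" if "N \<le> n" for n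
    proof -
      have last_eq: "last (map U [0..<Suc n]) = U n"
        by (simp add: last_map)
      have "\<forall>x\<in>topspace X. norm (f x) \<le> real (length (map U [0..<Suc n]))"
        using N that order_trans by fastforce
      then show ?thesis
        using cover[of "map U [0..<Suc n]" f] U f unfolding last_eq by blast
    qed
    then show "\<forall>\<^sub>F n in sequentially. f \<in> set_op (Cp_add X) (\<sigma> (map U [0..<Suc n])) (U n)"
      unfolding eventually_sequentially by blast
  qed
qed

lemma continuous_function_dominating_sequence:
  fixes c :: "nat \<Rightarrow> real"
  obtains \<psi> :: "real \<Rightarrow> real"
  where "continuous_on UNIV \<psi>" "\<And>n s. real n \<le> s \<Longrightarrow> c n \<le> \<psi> s"
proof
  define ramp where "ramp n s = max 0 (c n) * max 0 (min 1 (s - real n + 1))" for n s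
  define \<psi> where "\<psi> s = (\<Sum>n\<in>{n. real n < s + 1}. ramp n s)" for s
  have ramp_0: "ramp n s = 0" if "s + 1 \<le> real n" for n s
    using that by (simp add: ramp_def)
  have \<psi>_eq: "\<psi> s = (\<Sum>n<m. ramp n s)" if "s + 1 \<le> real m" for s m
    unfolding \<psi>_def using that ramp_0
    by (intro sum.mono_neutral_left) auto
  show "continuous_on UNIV \<psi>"
    unfolding continuous_on_eq_continuous_at[OF open_UNIV]
  proof
    fix s0 :: real
    obtain m :: nat where m: "s0 + 2 < real m"
      using reals_Archimedean2 by blast
    let ?S = "{s. s < real m - 1}"
    have "continuous_on ?S (\<lambda>s. \<Sum>n<m. ramp n s)"
      unfolding ramp_def by (intro continuous_intros)
    then have "continuous_on ?S \<psi>"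
      by (rule continuous_on_cong[THEN iffD1, rotated 2]) (auto intro!: \<psi>_eq[symmetric])
    moreover have "open ?S"
      by (simp add: open_Collect_less)
    ultimately show "isCont \<psi> s0"
      using continuous_on_eq_continuous_at m by fastforce
  qed
  fix n s assume "real n \<le> s"
  obtain m :: nat where "s + 1 \<le> real m"
    using real_arch_simple by blast
  then have "{n. real n < s + 1} \<subseteq> {..<m}"
    by (auto simp flip: of_nat_less_iff)
  then have fin: "finite {n. real n < s + 1}"
    using finite_subset by blast
  have "c n \<le> ramp n s"
    using \<open>real n \<le> s\<close> by (simp add: ramp_def)
  also have "\<dots> \<le> \<psi> s"
    unfolding \<psi>_def using \<open>real n \<le> s\<close> fin
    by (intro member_le_sum) (auto simp: ramp_def)
  finally show "c n \<le> \<psi> s" .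
qed

lemma set_op_Cp_add_eval:
  assumes "g \<in> set_op (Cp_add X) A U" "x \<in> topspace X"
  obtains a u where "a \<in> A" "u \<in> U" "g x = a x + u x"
  using assms unfolding set_op_def Cp_add_def by auto

lemma unbounded_function_escaping_points:
  fixes f :: "'a \<Rightarrow> real"
  assumes "\<not> bounded (f ` S)"
  obtains xs where "\<And>n. xs n \<in> S" "\<And>n. real n \<le> \<bar>f (xs n)\<bar>"
proof -
  have "\<exists>x\<in>S. real n \<le> \<bar>f x\<bar>" for n :: nat
  proof (rule ccontr)
    assume "\<not> ?thesis"
    then have "\<forall>y\<in>f ` S. norm y \<le> real n"
      by auto
    with assms show False
      unfolding bounded_iff by blast
  qed
  then obtain xs where "\<And>n. xs n \<in> S" "\<And>n. real n \<le> \<bar>f (xs n)\<bar>"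
    by metis
  then show thesis
    by (rule that)
qed

lemma M_bounded_Cp_eval_bound:
  fixes xs :: "nat \<Rightarrow> 'a"
  assumes M: "M_bounded (Cp X :: ('a \<Rightarrow> 'b::real_normed_vector) topology) (Cp_add X) (Cp_zero X)"
    and xs: "\<And>n. xs n \<in> topspace X"
  obtains c where "\<And>g. g \<in> topspace (Cp X :: ('a \<Rightarrow> 'b) topology) \<Longrightarrow> \<exists>m. norm (g (xs m)) < c m"
proof -
  define U :: "nat \<Rightarrow> ('a \<Rightarrow> 'b) set"
    where "U n = {g \<in> topspace (Cp X). g (xs n) \<in> ball 0 1}" for n
  have U: "\<forall>n. nbhd_e (Cp X) (Cp_zero X) (U n)"
    unfolding U_def by (intro allI nbhd_e_Cp_eval[OF xs]) simp_all
  obtain A where A: "\<forall>n. finite (A n) \<and> A n \<subseteq> topspace (Cp X)"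
      "topspace (Cp X) = (\<Union>n. set_op (Cp_add X) (A n) (U n))"
    using M[unfolded M_bounded_def, THEN spec[of _ U], THEN mp, OF U] by (elim exE conjE) (rule that)
  define c where "c n = 1 + Max (insert 0 ((\<lambda>a. norm (a (xs n))) ` A n))" for n
  have "\<exists>m. norm (g (xs m)) < c m" if g: "g \<in> topspace (Cp X)" for g :: "'a \<Rightarrow> 'b"
  proof -
    obtain m where "g \<in> set_op (Cp_add X) (A m) (U m)"
      using g unfolding A(2) by blast
    then obtain a u where "a \<in> A m" "u \<in> U m" and g_xs: "g (xs m) = a (xs m) + u (xs m)"
      using xs by (rule set_op_Cp_add_eval)
    have "norm (g (xs m)) \<le> norm (a (xs m)) + norm (u (xs m))"
      unfolding g_xs by (rule norm_triangle_ineq)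
    also have "\<dots> < norm (a (xs m)) + 1"
      using \<open>u \<in> U m\<close> by (simp add: U_def)
    also have "\<dots> \<le> c m"
      unfolding c_def using A(1) \<open>a \<in> A m\<close> by (simp add: Max_ge)
    finally show ?thesis
      by blast
  qed
  then show thesis
    by (rule that)
qed

lemma M_bounded_imp_pseudocompact:
  assumes M: "M_bounded (Cp X :: ('a \<Rightarrow> 'b::euclidean_space) topology) (Cp_add X) (Cp_zero X)"
  shows "pseudocompact X"
  unfolding pseudocompact_def
proof (intro allI impI, rule ccontr)
  fix f assume f: "continuous_map X euclideanreal f" "\<not> bounded (f ` topspace X)"
  obtain xs where xs: "\<And>n. xs n \<in> topspace X" "\<And>n. real n \<le> \<bar>f (xs n)\<bar>"
    using unbounded_function_escaping_points[OF f(2)] by blast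
  obtain c where c: "\<And>g. g \<in> topspace (Cp X :: ('a \<Rightarrow> 'b) topology) \<Longrightarrow> \<exists>m. norm (g (xs m)) < c m"
    using M_bounded_Cp_eval_bound[where xs = xs, OF M xs(1)] by blast
  obtain \<psi> where \<psi>: "continuous_on UNIV \<psi>" "\<And>n s. real n \<le> s \<Longrightarrow> c n \<le> \<psi> s"
    using continuous_function_dominating_sequence by blast
  obtain b :: 'b where "b \<in> Basis"
    using nonempty_Basis by blast
  define g where "g = restrict (\<lambda>x. \<psi> \<bar>f x\<bar> *\<^sub>R b) (topspace X)"
  have "continuous_on UNIV (\<lambda>s. \<psi> s *\<^sub>R b)"
    using \<psi>(1) by (intro continuous_intros)
  then have "continuous_map X euclidean ((\<lambda>s. \<psi> s *\<^sub>R b) \<circ> (\<lambda>x. \<bar>f x\<bar>))"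
    by (intro continuous_map_compose[of _ euclidean] continuous_map_real_abs f(1)) simp
  then have "continuous_map X euclidean g"
    unfolding g_def by (rule continuous_map_eq) simp
  then have "g \<in> topspace (Cp X)"
    by (simp add: topspace_Cp g_def)
  then obtain m where "norm (g (xs m)) < c m"
    by (blast dest: c)
  also have "\<dots> \<le> \<psi> \<bar>f (xs m)\<bar>"
    using \<psi>(2) xs(2) by blast
  also have "\<dots> \<le> norm (g (xs m))"
    using xs(1) \<open>b \<in> Basis\<close> by (simp add: g_def)
  finally show False by simp
qed

lemma not_H_bounded_Cp_sequences:
  assumes "topspace Z \<noteq> {}"
  shows "\<not> H_bounded (Cp Z :: ('c \<Rightarrow> (nat \<Rightarrow> real)) topology) (Cp_add Z) (Cp_zero Z)"
proof
  obtain z where z: "z \<in> topspace Z"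
    using assms by blast
  assume H: "H_bounded (Cp Z :: ('c \<Rightarrow> (nat \<Rightarrow> real)) topology) (Cp_add Z) (Cp_zero Z)"
  define U :: "nat \<Rightarrow> ('c \<Rightarrow> (nat \<Rightarrow> real)) set"
    where "U n = {g \<in> topspace (Cp Z). g z \<in> {v. \<bar>v n\<bar> < 1}}" for n
  have "open {v :: nat \<Rightarrow> real. \<bar>v n\<bar> < 1}" for n
  proof -
    have "continuous_on UNIV (\<lambda>v :: nat \<Rightarrow> real. \<bar>v n\<bar>)"
      by (intro continuous_on_rabs) simp
    then show ?thesis
      by (rule open_Collect_less) simp
  qed
  then have U: "\<forall>n. nbhd_e (Cp Z) (Cp_zero Z) (U n)"
    unfolding U_def by (intro allI nbhd_e_Cp_eval[OF z]) simp_all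
  obtain A where A: "\<forall>n. finite (A n) \<and> A n \<subseteq> topspace (Cp Z)"
      "\<forall>g\<in>topspace (Cp Z). \<forall>\<^sub>F n in sequentially. g \<in> set_op (Cp_add Z) (A n) (U n)"
    using H[unfolded H_bounded_def, THEN spec[of _ U], THEN mp, OF U] by (elim exE conjE) (rule that)
  define c :: "nat \<Rightarrow> real" where "c n = 1 + Max (insert 0 ((\<lambda>a. \<bar>a z n\<bar>) ` A n))" for n
  have c: "\<bar>a z n\<bar> + 1 \<le> c n" if "a \<in> A n" for a n
    unfolding c_def using A(1) that by (simp add: Max_ge)
  define g :: "'c \<Rightarrow> (nat \<Rightarrow> real)" where "g = restrict (\<lambda>_. c) (topspace Z)"
  have "continuous_map Z euclidean g"
    unfolding g_def by (rule continuous_map_eq[of _ _ "\<lambda>_. c"]) simp_all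
  then have "g \<in> topspace (Cp Z)"
    by (simp add: topspace_Cp g_def)
  then have "\<forall>\<^sub>F n in sequentially. g \<in> set_op (Cp_add Z) (A n) (U n)"
    using A(2) by blast
  then obtain m where "g \<in> set_op (Cp_add Z) (A m) (U m)"
    unfolding eventually_sequentially by blast
  then obtain a u where "a \<in> A m" "u \<in> U m" "g z = a z + u z"
    using z by (rule set_op_Cp_add_eval)
  then have "c m = a z m + u z m" "\<bar>u z m\<bar> < 1"
    using z by (simp_all add: g_def U_def)
  with c[OF \<open>a \<in> A m\<close>] show False
    by linarith
qed

theorem mainTheorem10:
  fixes X :: "'a topology"
  assumes "tychonoff_space X"
  shows "(strictly_H_bounded (Cp X :: ('a \<Rightarrow> real^'n) topology) (Cp_add X) (Cp_zero X)
            \<longleftrightarrow> H_bounded (Cp X :: ('a \<Rightarrow> real^'n) topology) (Cp_add X) (Cp_zero X))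
       \<and> (H_bounded (Cp X :: ('a \<Rightarrow> real^'n) topology) (Cp_add X) (Cp_zero X)
            \<longleftrightarrow> strictly_M_bounded (Cp X :: ('a \<Rightarrow> real^'n) topology) (Cp_add X) (Cp_zero X))
       \<and> (strictly_M_bounded (Cp X :: ('a \<Rightarrow> real^'n) topology) (Cp_add X) (Cp_zero X)
            \<longleftrightarrow> M_bounded (Cp X :: ('a \<Rightarrow> real^'n) topology) (Cp_add X) (Cp_zero X))
       \<and> (M_bounded (Cp X :: ('a \<Rightarrow> real^'n) topology) (Cp_add X) (Cp_zero X)
            \<longleftrightarrow> pseudocompact X)
       \<and> (\<forall>Z :: 'c topology. tychonoff_space Z \<and> topspace Z \<noteq> {} \<longrightarrow>
            \<not> H_bounded (Cp Z :: ('c \<Rightarrow> (nat \<Rightarrow> real)) topology) (Cp_add Z) (Cp_zero Z))"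
proof -
  let ?T = "Cp X :: ('a \<Rightarrow> real^'n) topology"
  have "pseudocompact X \<Longrightarrow> strictly_H_bounded ?T (Cp_add X) (Cp_zero X)"
    by (rule pseudocompact_imp_strictly_H_bounded)
  moreover have "strictly_H_bounded ?T (Cp_add X) (Cp_zero X) \<Longrightarrow> H_bounded ?T (Cp_add X) (Cp_zero X)"
    by (rule strictly_H_bounded_imp_H_bounded)
  moreover have "strictly_H_bounded ?T (Cp_add X) (Cp_zero X) \<Longrightarrow> strictly_M_bounded ?T (Cp_add X) (Cp_zero X)"
    by (rule strictly_H_bounded_imp_strictly_M_bounded[OF Cp_add_in_Cp])
  moreover have "H_bounded ?T (Cp_add X) (Cp_zero X) \<Longrightarrow> M_bounded ?T (Cp_add X) (Cp_zero X)"
    by (rule H_bounded_imp_M_bounded[OF Cp_add_in_Cp])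
  moreover have "strictly_M_bounded ?T (Cp_add X) (Cp_zero X) \<Longrightarrow> M_bounded ?T (Cp_add X) (Cp_zero X)"
    by (rule strictly_M_bounded_imp_M_bounded)
  moreover have "M_bounded ?T (Cp_add X) (Cp_zero X) \<Longrightarrow> pseudocompact X"
    by (rule M_bounded_imp_pseudocompact)
  moreover have "\<not> H_bounded (Cp Z :: ('c \<Rightarrow> (nat \<Rightarrow> real)) topology) (Cp_add Z) (Cp_zero Z)"
    if "topspace Z \<noteq> {}" for Z :: "'c topology"
    using that by (rule not_H_bounded_Cp_sequences)
  ultimately show ?thesis
    by blast
qed

end
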